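(* A metric formula $\varphi$ is an $\mathrm{MHT}_f$-tautology iff $\sigma(\varphi)$ is an $\mathrm{MHT}_f$-tautology.
   Context: Metric formulas over $\mathcal{A}$: $\varphi ::= p \mid \bot \mid \varphi_1\otimes\varphi_2 \mid \bullet_I\varphi \mid \varphi_1\,\mathsf{S}_I\,\varphi_2 \mid \varphi_1\,\mathsf{T}_I\,\varphi_2 \mid \bigcirc_I\varphi \mid \varphi_1\,\mathsf{U}_I\,\varphi_2 \mid \varphi_1\,\mathsf{R}_I\,\varphi_2$, $\otimes\in\{\to,\wedge,\vee\}$, $I=[m,n)$, $m\in\mathbb{N}$, $n\in\mathbb{N}\cup\{\omega\}$. Derived: $\neg\varphi=\varphi\to\bot$, $\top=\neg\bot$, $\blacksquare_I\varphi=\bot\,\mathsf{T}_I\,\varphi$ (always before), "eventually before" $=\top\,\mathsf{S}_I\,\varphi$, $\widehat{\bullet}_I\varphi=\bullet_I\varphi\vee\neg\bullet_I\top$, $\Box_I\varphi=\bot\,\mathsf{R}_I\,\varphi$, $\Diamond_I\varphi=\top\,\mathsf{U}_I\,\varphi$, $\widehat{\bigcirc}_I\varphi=\bigcirc_I\varphi\vee\neg\bigcirc_I\top$. Timed HT-traces $(\langle\mathbf{H},\mathbf{T}\rangle,\tau)$ of length $\lambda$: $H_i\subseteq T_i\subseteq\mathcal{A}$ for $i\in[0,\lambda)$, $\tau:[0,\lambda)\to\mathbb{N}$, $\tau(0)=0$, $\tau(i)\le\tau(i+1)$. Satisfaction at $k$: $\bot$ never; $p$ iff $p\in H_k$; $\wedge,\vee$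 usual; $\varphi\to\psi$ iff for both $\mathbf{M}'=\mathbf{M}$ and $\mathbf{M}'=(\langle\mathbf{T},\mathbf{T}\rangle,\tau)$, $\mathbf{M}',k\not\models\varphi$ or $\mathbf{M}',k\models\psi$; $\bullet_I\varphi$: $k>0$, $\varphi$ at $k-1$, $\tau(k)-\tau(k-1)\in I$; $\varphi\,\mathsf{S}_I\,\psi$: some $j\in[0,k]$ with $\tau(k)-\tau(j)\in I$, $\psi$ at $j$, $\varphi$ at all $i\in(j,k]$; $\varphi\,\mathsf{T}_I\,\psi$: for all $j\in[0,k]$ with $\tau(k)-\tau(j)\in I$, $\psi$ at $j$ or $\varphi$ at some $i\in(j,k]$; $\bigcirc_I\varphi$: $k+1<\lambda$, $\varphi$ at $k+1$, $\tau(k+1)-\tau(k)\in I$; $\varphi\,\mathsf{U}_I\,\psi$: some $j\in[k,\lambda)$ with $\tau(j)-\tau(k)\in I$, $\psi$ at $j$, $\varphi$ at all $i\in[k,j)$; $\varphi\,\mathsf{R}_I\,\psi$: for all $j\in[k,\lambda)$ with $\tau(j)-\tau(k)\in I$, $\psi$ at $j$ or $\varphi$ at some $i\in[k,j)$. An $\mathrm{MHT}_f$-tautology is a formula satisfied at every $k\in[0,\lambda)$ of every timed HT-trace of finite length $\lambda$. $\sigma(\varphi)$ replaces each connective by its swapped-time version, the pairs being $\mathsf{U}_I/\mathsf{S}_I$, $\mathsf{R}_I/\mathsf{T}_I$, $\bigcirc_I/\bullet_I$, $\widehat{\bigcirc}_I/\widehat{\bullet}_I$, $\Box_I/\blacksquare_I$,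 and $\Diamond_I$ (i.e. $\top\,\mathsf{U}_I\,\cdot$) / eventually before ($\top\,\mathsf{S}_I\,\cdot$). *)

theory Defs
  imports Main "HOL-Library.Extended_Nat"
begin

text \<open>Intervals I = [m, n) with m a natural number and n a natural number or omega
  (represented by an extended natural, infinity = omega).\<close>
type_synonym intv = "nat \<times> enat"

definition in_intv :: "nat \<Rightarrow> intv \<Rightarrow> bool" where
  "in_intv d I \<longleftrightarrow> fst I \<le> d \<and> enat d < snd I"

datatype 'a mform =
    Atom 'a
  | Bot
  | Impl "'a mform" "'a mform"
  | Conj "'a mform" "'a mform"
  | Disj "'a mform" "'a mform"
  | Prev intv "'a mform"
  | Since intv "'a mform" "'a mform"
  | Trig intv "'a mform" "'a mform"
  | Next intv "'a mform"
  | Until intv "'a mform" "'a mform"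
  | Release intv "'a mform" "'a mform"

text \<open>Satisfaction at position k of the timed HT-trace (H,T,tau) of length lam.
  The two arguments H and T are the "here" and "there" traces; implication is
  evaluated both in (H,T) and in (T,T).\<close>
fun sat :: "nat \<Rightarrow> (nat \<Rightarrow> nat) \<Rightarrow> (nat \<Rightarrow> 'a set) \<Rightarrow> (nat \<Rightarrow> 'a set) \<Rightarrow> nat \<Rightarrow> 'a mform \<Rightarrow> bool" where
  "sat lam tau H T k (Atom p) = (p \<in> H k)"
| "sat lam tau H T k Bot = False"
| "sat lam tau H T k (Impl f g) =
     ((sat lam tau H T k f \<longrightarrow> sat lam tau H T k g) \<and>
      (sat lam tau T T k f \<longrightarrow> sat lam tau T T k g))"
| "sat lam tau H T k (Conj f g) = (sat lam tau H T k f \<and> sat lam tau H T k g)"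
| "sat lam tau H T k (Disj f g) = (sat lam tau H T k f \<or> sat lam tau H T k g)"
| "sat lam tau H T k (Prev I f) =
     (k > 0 \<and> sat lam tau H T (k - 1) f \<and> in_intv (tau k - tau (k - 1)) I)"
| "sat lam tau H T k (Since I f g) =
     (\<exists>j\<le>k. in_intv (tau k - tau j) I \<and> sat lam tau H T j g \<and>
        (\<forall>i. j < i \<and> i \<le> k \<longrightarrow> sat lam tau H T i f))"
| "sat lam tau H T k (Trig I f g) =
     (\<forall>j\<le>k. in_intv (tau k - tau j) I \<longrightarrow> sat lam tau H T j g \<or>
        (\<exists>i. j < i \<and> i \<le> k \<and> sat lam tau H T i f))"
| "sat lam tau H T k (Next I f) =
     (k + 1 < lam \<and> sat lam tau H T (k + 1) f \<and> in_intv (tau (k + 1) - tau k) I)"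
| "sat lam tau H T k (Until I f g) =
     (\<exists>j. k \<le> j \<and> j < lam \<and> in_intv (tau j - tau k) I \<and> sat lam tau H T j g \<and>
        (\<forall>i. k \<le> i \<and> i < j \<longrightarrow> sat lam tau H T i f))"
| "sat lam tau H T k (Release I f g) =
     (\<forall>j. k \<le> j \<and> j < lam \<and> in_intv (tau j - tau k) I \<longrightarrow> sat lam tau H T j g \<or>
        (\<exists>i. k \<le> i \<and> i < j \<and> sat lam tau H T i f))"

definition timed_ht_trace :: "nat \<Rightarrow> (nat \<Rightarrow> nat) \<Rightarrow> (nat \<Rightarrow> 'a set) \<Rightarrow> (nat \<Rightarrow> 'a set) \<Rightarrow> bool" where
  "timed_ht_trace lam tau H T \<longleftrightarrow>
     (\<forall>i<lam. H i \<subseteq> T i) \<and> tau 0 = 0 \<and> (\<forall>i. i + 1 < lam \<longrightarrow> tau i \<le> tau (i + 1))"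

definition mht_f_tautology :: "'a mform \<Rightarrow> bool" where
  "mht_f_tautology f \<longleftrightarrow>
     (\<forall>lam tau H T. timed_ht_trace lam tau H T \<longrightarrow> (\<forall>k<lam. sat lam tau H T k f))"

fun sigma :: "'a mform \<Rightarrow> 'a mform" where
  "sigma (Atom p) = Atom p"
| "sigma Bot = Bot"
| "sigma (Impl f g) = Impl (sigma f) (sigma g)"
| "sigma (Conj f g) = Conj (sigma f) (sigma g)"
| "sigma (Disj f g) = Disj (sigma f) (sigma g)"
| "sigma (Prev I f) = Next I (sigma f)"
| "sigma (Since I f g) = Until I (sigma f) (sigma g)"
| "sigma (Trig I f g) = Release I (sigma f) (sigma g)"
| "sigma (Next I f) = Prev I (sigma f)"
| "sigma (Until I f g) = Since I (sigma f) (sigma g)"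
| "sigma (Release I f g) = Trig I (sigma f) (sigma g)"

end

theory Submission
  imports Defs
begin

text \<open>Reading a finite timed trace backwards turns every future operator into the
  corresponding past operator with the same interval, since the reversed time stamps
  \<open>\<tau>(\<lambda>-1) - \<tau>(\<lambda>-1-i)\<close> preserve all distances between positions. Thus \<open>\<sigma>(\<phi>)\<close> holds at
  \<open>k\<close> of a trace iff \<open>\<phi>\<close> holds at \<open>\<lambda>-1-k\<close> of the reversed trace; as reversal maps
  timed HT-traces to timed HT-traces and \<open>\<sigma>\<close> is an involution, both directions follow.\<close>

definition reverse_trace :: "nat \<Rightarrow> (nat \<Rightarrow> 'b) \<Rightarrow> nat \<Rightarrow> 'b" where
  "reverse_trace lam X i = X (lam - 1 - i)"

definition reverse_time :: "nat \<Rightarrow> (nat \<Rightarrow> nat) \<Rightarrow> nat \<Rightarrow> nat" where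
  "reverse_time lam tau i = tau (lam - 1) - tau (lam - 1 - i)"

definition time_mirror :: "nat \<Rightarrow> (nat \<Rightarrow> nat) \<Rightarrow> (nat \<Rightarrow> nat) \<Rightarrow> bool" where
  "time_mirror lam tau tau' \<longleftrightarrow>
     (\<forall>a b. a \<le> b \<longrightarrow> b < lam \<longrightarrow> tau' (lam - 1 - a) - tau' (lam - 1 - b) = tau b - tau a)"

lemma time_mirrorD:
  "time_mirror lam tau tau' \<Longrightarrow> a \<le> b \<Longrightarrow> b < lam \<Longrightarrow>
     tau' (lam - 1 - a) - tau' (lam - 1 - b) = tau b - tau a"
  unfolding time_mirror_def by blast

lemma time_mirror_sym:
  assumes "time_mirror lam tau tau'"
  shows "time_mirror lam tau' tau"
  unfolding time_mirror_def
proof (intro allI impI)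
  fix a b assume "a \<le> b" "b < lam"
  then show "tau (lam - 1 - a) - tau (lam - 1 - b) = tau' b - tau' a"
    using time_mirrorD[OF assms, of "lam - 1 - b" "lam - 1 - a"] by simp
qed

lemma time_mirror_reverse_time:
  assumes "mono_on {..<lam} tau"
  shows "time_mirror lam tau (reverse_time lam tau)"
  unfolding time_mirror_def
proof (intro allI impI)
  fix a b assume "a \<le> b" "b < lam"
  moreover from this have "tau a \<le> tau b" "tau b \<le> tau (lam - 1)"
    using mono_onD[OF assms] by simp_all
  ultimately show
    "reverse_time lam tau (lam - 1 - a) - reverse_time lam tau (lam - 1 - b) = tau b - tau a"
    by (simp add: reverse_time_def)
qed

lemma timed_ht_trace_mono_on:
  assumes "timed_ht_trace lam tau H T"
  shows "mono_on {..<lam} tau"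
proof (rule mono_onI)
  fix i j :: nat assume "i \<in> {..<lam}" "j \<in> {..<lam}" "i \<le> j"
  then show "tau i \<le> tau j"
    by (intro lift_Suc_mono_le_ivl[where N = "{n. n + 1 < lam}", OF _ \<open>i \<le> j\<close>])
      (use assms in \<open>auto simp: timed_ht_trace_def\<close>)
qed

lemma timed_ht_trace_reverse:
  assumes "timed_ht_trace lam tau H T"
  shows "timed_ht_trace lam (reverse_time lam tau) (reverse_trace lam H) (reverse_trace lam T)"
  unfolding timed_ht_trace_def
proof (intro conjI allI impI)
  fix i assume "i + 1 < lam"
  then have "tau (lam - 1 - (i + 1)) \<le> tau (lam - 1 - i)"
    using mono_onD[OF timed_ht_trace_mono_on[OF assms]] by simp
  then show "reverse_time lam tau i \<le> reverse_time lam tau (i + 1)"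
    by (simp add: reverse_time_def diff_le_mono2)
qed (use assms in \<open>auto simp: timed_ht_trace_def reverse_trace_def reverse_time_def\<close>)

lemma ex_interval_reflect:
  fixes a lam :: nat
  assumes "a < lam"
  shows "(\<exists>j. a \<le> j \<and> j < lam \<and> R j) \<longleftrightarrow> (\<exists>j\<le>lam - 1 - a. R (lam - 1 - j))"
proof
  assume "\<exists>j. a \<le> j \<and> j < lam \<and> R j"
  then obtain j where "a \<le> j" "j < lam" "R j" by blast
  moreover from this have "lam - 1 - (lam - 1 - j) = j" by simp
  ultimately show "\<exists>j\<le>lam - 1 - a. R (lam - 1 - j)"
    by (intro exI[of _ "lam - 1 - j"]) auto
next
  assume "\<exists>j\<le>lam - 1 - a. R (lam - 1 - j)"
  then obtain j where "j \<le> lam - 1 - a" "R (lam - 1 - j)" by blast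
  with assms show "\<exists>j. a \<le> j \<and> j < lam \<and> R j"
    by (intro exI[of _ "lam - 1 - j"]) auto
qed

lemma all_interval_reflect:
  fixes a b lam :: nat
  assumes "b < lam"
  shows "(\<forall>i. a \<le> i \<and> i < b \<longrightarrow> R i) \<longleftrightarrow>
    (\<forall>i. lam - 1 - b < i \<and> i \<le> lam - 1 - a \<longrightarrow> R (lam - 1 - i))"
proof
  assume R: "\<forall>i. a \<le> i \<and> i < b \<longrightarrow> R i"
  show "\<forall>i. lam - 1 - b < i \<and> i \<le> lam - 1 - a \<longrightarrow> R (lam - 1 - i)"
  proof (intro allI impI)
    fix i assume "lam - 1 - b < i \<and> i \<le> lam - 1 - a"
    with assms have "a \<le> lam - 1 - i" "lam - 1 - i < b" by auto
    with R show "R (lam - 1 - i)" by blast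
  qed
next
  assume R: "\<forall>i. lam - 1 - b < i \<and> i \<le> lam - 1 - a \<longrightarrow> R (lam - 1 - i)"
  show "\<forall>i. a \<le> i \<and> i < b \<longrightarrow> R i"
  proof (intro allI impI)
    fix i assume "a \<le> i \<and> i < b"
    with assms have "lam - 1 - b < lam - 1 - i" "lam - 1 - i \<le> lam - 1 - a"
      and "lam - 1 - (lam - 1 - i) = i" by auto
    with R show "R i" by metis
  qed
qed

lemma until_iff_since_mirror:
  fixes k lam :: nat
  assumes mirror: "time_mirror lam tau tau'" and k: "k < lam"
    and P: "\<And>i. i < lam \<Longrightarrow> P i = P' (lam - 1 - i)"
    and Q: "\<And>i. i < lam \<Longrightarrow> Q i = Q' (lam - 1 - i)"
  shows "(\<exists>j. k \<le> j \<and> j < lam \<and> in_intv (tau j - tau k) I \<and> Q j \<and>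
           (\<forall>i. k \<le> i \<and> i < j \<longrightarrow> P i))
     \<longleftrightarrow> (\<exists>j\<le>lam - 1 - k. in_intv (tau' (lam - 1 - k) - tau' j) I \<and> Q' j \<and>
           (\<forall>i. j < i \<and> i \<le> lam - 1 - k \<longrightarrow> P' i))"
    (is "_ \<longleftrightarrow> (\<exists>j\<le>lam - 1 - k. ?since j)")
proof -
  have reflected: "(in_intv (tau (lam - 1 - j) - tau k) I \<and> Q (lam - 1 - j) \<and>
      (\<forall>i. k \<le> i \<and> i < lam - 1 - j \<longrightarrow> P i)) \<longleftrightarrow> ?since j"
    if j: "j \<le> lam - 1 - k" for j
  proof -
    from j k have bounds: "k \<le> lam - 1 - j" "lam - 1 - j < lam"
      and reflect: "lam - 1 - (lam - 1 - j) = j" by auto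
    have "tau (lam - 1 - j) - tau k = tau' (lam - 1 - k) - tau' j"
      using time_mirrorD[OF mirror bounds] reflect by simp
    moreover have "Q (lam - 1 - j) \<longleftrightarrow> Q' j"
      using Q[OF bounds(2)] reflect by simp
    moreover have "(\<forall>i. k \<le> i \<and> i < lam - 1 - j \<longrightarrow> P i) \<longleftrightarrow>
        (\<forall>i. j < i \<and> i \<le> lam - 1 - k \<longrightarrow> P' i)"
      using all_interval_reflect[OF bounds(2), of k P] P[of "lam - 1 - _"] reflect k by auto
    ultimately show ?thesis by simp
  qed
  show ?thesis
    unfolding ex_interval_reflect[OF k] using reflected by blast
qed

lemma since_iff_until_mirror:
  fixes k lam :: nat
  assumes mirror: "time_mirror lam tau tau'" and k: "k < lam"
    and P: "\<And>i. i < lam \<Longrightarrow> P i = P' (lam - 1 - i)"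
    and Q: "\<And>i. i < lam \<Longrightarrow> Q i = Q' (lam - 1 - i)"
  shows "(\<exists>j\<le>k. in_intv (tau k - tau j) I \<and> Q j \<and> (\<forall>i. j < i \<and> i \<le> k \<longrightarrow> P i))
     \<longleftrightarrow> (\<exists>j. lam - 1 - k \<le> j \<and> j < lam \<and> in_intv (tau' j - tau' (lam - 1 - k)) I \<and>
           Q' j \<and> (\<forall>i. lam - 1 - k \<le> i \<and> i < j \<longrightarrow> P' i))"
proof -
  have "P' i = P (lam - 1 - i)" "Q' i = Q (lam - 1 - i)" if "i < lam" for i
    using that P[of "lam - 1 - i"] Q[of "lam - 1 - i"] by auto
  with k show ?thesis
    using until_iff_since_mirror[OF time_mirror_sym[OF mirror], of "lam - 1 - k" P' P Q' Q I]
    by auto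
qed

lemma sat_sigma_mirror:
  assumes mirror: "time_mirror lam tau tau'"
  shows "k < lam \<Longrightarrow> sat lam tau H T k (sigma f) \<longleftrightarrow>
    sat lam tau' (reverse_trace lam H) (reverse_trace lam T) (lam - 1 - k) f"
proof (induction f arbitrary: k H T)
  case (Prev I f)
  show ?case
  proof (cases "k + 1 < lam")
    case True
    then have "lam - 1 - k - 1 = lam - 1 - (k + 1)"
      and "tau' (lam - 1 - k) - tau' (lam - 1 - (k + 1)) = tau (k + 1) - tau k"
      using time_mirrorD[OF mirror, of k "k + 1"] by auto
    with True show ?thesis using Prev.IH[of "k + 1" H T] by auto
  qed (use Prev.prems in auto)
next
  case (Next I f)
  show ?case
  proof (cases "0 < k")
    case True
    then have "lam - 1 - k + 1 = lam - 1 - (k - 1)"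
      and "tau' (lam - 1 - (k - 1)) - tau' (lam - 1 - k) = tau k - tau (k - 1)"
      using time_mirrorD[OF mirror, of "k - 1" k] Next.prems by auto
    with True Next.prems show ?thesis using Next.IH[of "k - 1" H T] by auto
  qed (use Next.prems in auto)
next
  case (Since I f g)
  show ?case
    unfolding sigma.simps sat.simps
    by (rule until_iff_since_mirror[OF mirror Since.prems]) (simp_all add: Since.IH)
next
  case (Until I f g)
  show ?case
    unfolding sigma.simps sat.simps
    by (rule since_iff_until_mirror[OF mirror Until.prems]) (simp_all add: Until.IH)
next
  case (Trig I f g)
  \<comment> \<open>trigger (release) is the negation of since (until) applied to the negated arguments\<close>
  let ?H' = "reverse_trace lam H" and ?T' = "reverse_trace lam T"
  show ?case
    using until_iff_since_mirror[OF mirror Trig.prems,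
        of "\<lambda>i. \<not> sat lam tau H T i (sigma f)" "\<lambda>i. \<not> sat lam tau' ?H' ?T' i f"
           "\<lambda>i. \<not> sat lam tau H T i (sigma g)" "\<lambda>i. \<not> sat lam tau' ?H' ?T' i g" I]
    by (auto simp: Trig.IH)
next
  case (Release I f g)
  let ?H' = "reverse_trace lam H" and ?T' = "reverse_trace lam T"
  show ?case
    using since_iff_until_mirror[OF mirror Release.prems,
        of "\<lambda>i. \<not> sat lam tau H T i (sigma f)" "\<lambda>i. \<not> sat lam tau' ?H' ?T' i f"
           "\<lambda>i. \<not> sat lam tau H T i (sigma g)" "\<lambda>i. \<not> sat lam tau' ?H' ?T' i g" I]
    by (auto simp: Release.IH)
qed (auto simp: reverse_trace_def)

lemma sigma_sigma [simp]: "sigma (sigma f) = f"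
  by (induction f) auto

lemma mht_f_tautology_sigma:
  fixes f :: "'a mform"
  assumes "mht_f_tautology f"
  shows "mht_f_tautology (sigma f)"
  unfolding mht_f_tautology_def
proof (intro allI impI)
  fix lam tau k and H T :: "nat \<Rightarrow> 'a set"
  assume trace: "timed_ht_trace lam tau H T" and "k < lam"
  have "sat lam (reverse_time lam tau) (reverse_trace lam H) (reverse_trace lam T) (lam - 1 - k) f"
    using assms timed_ht_trace_reverse[OF trace] \<open>k < lam\<close>
    unfolding mht_f_tautology_def by simp
  then show "sat lam tau H T k (sigma f)"
    using sat_sigma_mirror[OF time_mirror_reverse_time[OF timed_ht_trace_mono_on[OF trace]]
        \<open>k < lam\<close>, of H T f]
    by simp
qed

theorem theorem1:
  fixes \<phi> :: "'a mform"
  shows "mht_f_tautology \<phi> \<longleftrightarrow> mht_f_tautology (sigma \<phi>)"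
  using mht_f_tautology_sigma[of \<phi>] mht_f_tautology_sigma[of "sigma \<phi>"] by auto

end
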